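(* Let $n\ge0$ and let $\mathfrak g$ and $\mathfrak q$ be $n$-Lie-stem Leibniz algebras with $\mathfrak g\sim_n\mathfrak q$. Then $\mathcal Z_n^{\mathsf{Lie}}(\mathfrak g)\cong\mathcal Z_n^{\mathsf{Lie}}(\mathfrak q)$.
   Context: All Leibniz algebras are over a field $\mathbb{K}$ with $\frac12\in\mathbb{K}$. A Leibniz algebra is a vector space $\mathfrak g$ with a bilinear bracket $[-,-]$ satisfying $[x,[y,z]]=[[x,y],z]-[[x,z],y]$. For $x,y\in\mathfrak g$ put $[x,y]_{lie}=[x,y]+[y,x]$. For two-sided ideals $\mathfrak m,\mathfrak n$ of $\mathfrak g$, $[\mathfrak m,\mathfrak n]_{\mathsf{Lie}}$ denotes the two-sided ideal of $\mathfrak g$ generated by $\{[m,x]_{lie}: m\in\mathfrak m, x\in\mathfrak n\}$. Lower Lie-central series: $\gamma_1^{\mathsf{Lie}}(\mathfrak g)=\mathfrak g$, $\gamma_i^{\mathsf{Lie}}(\mathfrak g)=[\gamma_{i-1}^{\mathsf{Lie}}(\mathfrak g),\mathfrak g]_{\mathsf{Lie}}$ for $i\ge2$. Upper Lie-central series: $\mathcal Z_0^{\mathsf{Lie}}(\mathfrak g)=0$, $\mathcal Z_i^{\mathsf{Lie}}(\mathfrak g)=\{x\in\mathfrak g:[x,y]_{lie}\in\mathcal Z_{i-1}^{\mathsf{Lie}}(\mathfrak g)\ \text{for all } y\in\mathfrak g\}$ for $i\ge1$. A Leibniz algebra $\mathfrak g$ is an $n$-Lie-stem Leibniz algebra if $\mathcal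 Z_n^{\mathsf{Lie}}(\mathfrak g)\subseteq\gamma_{n+1}^{\mathsf{Lie}}(\mathfrak g)$. For $n\ge0$, Leibniz algebras $\mathfrak g_1,\mathfrak g_2$ are $n$-Lie-isoclinic, written $\mathfrak g_1\sim_n\mathfrak g_2$, if there exist Leibniz algebra isomorphisms $\eta:\mathfrak g_1/\mathcal Z_n^{\mathsf{Lie}}(\mathfrak g_1)\to\mathfrak g_2/\mathcal Z_n^{\mathsf{Lie}}(\mathfrak g_2)$ and $\xi:\gamma_{n+1}^{\mathsf{Lie}}(\mathfrak g_1)\to\gamma_{n+1}^{\mathsf{Lie}}(\mathfrak g_2)$ such that $\xi([\cdots[[x_1,x_2]_{lie},x_3]_{lie},\ldots,x_{n+1}]_{lie})=[\cdots[[y_1,y_2]_{lie},y_3]_{lie},\ldots,y_{n+1}]_{lie}$ whenever $x_i\in\mathfrak g_1$, $y_i\in\mathfrak g_2$ satisfy $\eta(x_i+\mathcal Z_n^{\mathsf{Lie}}(\mathfrak g_1))=y_i+\mathcal Z_n^{\mathsf{Lie}}(\mathfrak g_2)$ for $i=1,\ldots,n+1$. *)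

theory Defs
  imports Main "HOL.Vector_Spaces"
begin

text \<open>A Leibniz algebra over a field 'k is modelled on a whole type 'a (the carrier):
  a vector space given by a scalar multiplication s, with a bilinear bracket br satisfying
  the (right) Leibniz identity [x,[y,z]] = [[x,y],z] - [[x,z],y].\<close>

definition leibniz_algebra :: "('k::field \<Rightarrow> 'a::ab_group_add \<Rightarrow> 'a) \<Rightarrow> ('a \<Rightarrow> 'a \<Rightarrow> 'a) \<Rightarrow> bool" where
  "leibniz_algebra s br \<longleftrightarrow>
     Vector_Spaces.vector_space s \<and>
     (\<forall>x. Vector_Spaces.linear s s (br x)) \<and> (\<forall>y. Vector_Spaces.linear s s (\<lambda>x. br x y)) \<and>
     (\<forall>x y z. br x (br y z) = br (br x y) z - br (br x z) y)"

definition lie_br :: "('a::ab_group_add \<Rightarrow> 'a \<Rightarrow> 'a) \<Rightarrow> 'a \<Rightarrow> 'a \<Rightarrow> 'a" where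
  "lie_br br x y = br x y + br y x"

definition two_sided_ideal :: "('k::field \<Rightarrow> 'a::ab_group_add \<Rightarrow> 'a) \<Rightarrow> ('a \<Rightarrow> 'a \<Rightarrow> 'a) \<Rightarrow> 'a set \<Rightarrow> bool" where
  "two_sided_ideal s br I \<longleftrightarrow> Modules.module.subspace s I \<and> (\<forall>x\<in>I. \<forall>y. br x y \<in> I \<and> br y x \<in> I)"

definition gen_ideal :: "('k::field \<Rightarrow> 'a::ab_group_add \<Rightarrow> 'a) \<Rightarrow> ('a \<Rightarrow> 'a \<Rightarrow> 'a) \<Rightarrow> 'a set \<Rightarrow> 'a set" where
  "gen_ideal s br S = \<Inter>{I. two_sided_ideal s br I \<and> S \<subseteq> I}"

definition lie_comm :: "('k::field \<Rightarrow> 'a::ab_group_add \<Rightarrow> 'a) \<Rightarrow> ('a \<Rightarrow> 'a \<Rightarrow> 'a) \<Rightarrow> 'a set \<Rightarrow> 'a set \<Rightarrow> 'a set" where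
  "lie_comm s br M N = gen_ideal s br {lie_br br m x | m x. m \<in> M \<and> x \<in> N}"

text \<open>Lower Lie-central series, indexed as in the paper: gamma 1 = g, gamma i = [gamma (i-1), g]_Lie.
  (The index 0 is junk and set to the whole algebra.)\<close>
fun lower_lie :: "('k::field \<Rightarrow> 'a::ab_group_add \<Rightarrow> 'a) \<Rightarrow> ('a \<Rightarrow> 'a \<Rightarrow> 'a) \<Rightarrow> nat \<Rightarrow> 'a set" where
  "lower_lie s br 0 = UNIV"
| "lower_lie s br (Suc 0) = UNIV"
| "lower_lie s br (Suc (Suc i)) = lie_comm s br (lower_lie s br (Suc i)) UNIV"

fun upper_lie :: "('a::ab_group_add \<Rightarrow> 'a \<Rightarrow> 'a) \<Rightarrow> nat \<Rightarrow> 'a set" where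
  "upper_lie br 0 = {0}"
| "upper_lie br (Suc i) = {x. \<forall>y. lie_br br x y \<in> upper_lie br i}"

definition n_lie_stem :: "nat \<Rightarrow> ('k::field \<Rightarrow> 'a::ab_group_add \<Rightarrow> 'a) \<Rightarrow> ('a \<Rightarrow> 'a \<Rightarrow> 'a) \<Rightarrow> bool" where
  "n_lie_stem n s br \<longleftrightarrow> upper_lie br n \<subseteq> lower_lie s br (n + 1)"

fun iter_lie :: "('a::ab_group_add \<Rightarrow> 'a \<Rightarrow> 'a) \<Rightarrow> (nat \<Rightarrow> 'a) \<Rightarrow> nat \<Rightarrow> 'a" where
  "iter_lie br x 0 = x 0"
| "iter_lie br x (Suc k) = lie_br br (iter_lie br x k) (x (Suc k))"

text \<open>Coset x + Z; the quotient g/Z is the set of all cosets.\<close>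
definition coset :: "'a::ab_group_add set \<Rightarrow> 'a \<Rightarrow> 'a set" where
  "coset Z x = {x + z | z. z \<in> Z}"

text \<open>A Leibniz algebra isomorphism between the quotients g1/Z1 and g2/Z2, given as a map on cosets;
  the quotient operations are those induced on cosets by representatives.\<close>
definition quot_iso ::
  "('k::field \<Rightarrow> 'a::ab_group_add \<Rightarrow> 'a) \<Rightarrow> ('a \<Rightarrow> 'a \<Rightarrow> 'a) \<Rightarrow> 'a set \<Rightarrow>
   ('k \<Rightarrow> 'b::ab_group_add \<Rightarrow> 'b) \<Rightarrow> ('b \<Rightarrow> 'b \<Rightarrow> 'b) \<Rightarrow> 'b set \<Rightarrow> ('a set \<Rightarrow> 'b set) \<Rightarrow> bool" where
  "quot_iso s1 br1 Z1 s2 br2 Z2 eta \<longleftrightarrow>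
     bij_betw eta (range (coset Z1)) (range (coset Z2)) \<and>
     (\<forall>x y a b. eta (coset Z1 x) = coset Z2 a \<and> eta (coset Z1 y) = coset Z2 b \<longrightarrow>
         eta (coset Z1 (x + y)) = coset Z2 (a + b) \<and>
         eta (coset Z1 (br1 x y)) = coset Z2 (br2 a b)) \<and>
     (\<forall>c x a. eta (coset Z1 x) = coset Z2 a \<longrightarrow> eta (coset Z1 (s1 c x)) = coset Z2 (s2 c a))"

definition sub_iso ::
  "('k::field \<Rightarrow> 'a::ab_group_add \<Rightarrow> 'a) \<Rightarrow> ('a \<Rightarrow> 'a \<Rightarrow> 'a) \<Rightarrow> 'a set \<Rightarrow>
   ('k \<Rightarrow> 'b::ab_group_add \<Rightarrow> 'b) \<Rightarrow> ('b \<Rightarrow> 'b \<Rightarrow> 'b) \<Rightarrow> 'b set \<Rightarrow> ('a \<Rightarrow> 'b) \<Rightarrow> bool" where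
  "sub_iso s1 br1 A s2 br2 B f \<longleftrightarrow>
     bij_betw f A B \<and>
     (\<forall>x\<in>A. \<forall>y\<in>A. f (x + y) = f x + f y \<and> f (br1 x y) = br2 (f x) (f y)) \<and>
     (\<forall>c. \<forall>x\<in>A. f (s1 c x) = s2 c (f x))"

definition n_lie_isoclinic ::
  "nat \<Rightarrow> ('k::field \<Rightarrow> 'a::ab_group_add \<Rightarrow> 'a) \<Rightarrow> ('a \<Rightarrow> 'a \<Rightarrow> 'a) \<Rightarrow>
   ('k \<Rightarrow> 'b::ab_group_add \<Rightarrow> 'b) \<Rightarrow> ('b \<Rightarrow> 'b \<Rightarrow> 'b) \<Rightarrow> bool" where
  "n_lie_isoclinic n s1 br1 s2 br2 \<longleftrightarrow>
     (\<exists>eta xi.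
        quot_iso s1 br1 (upper_lie br1 n) s2 br2 (upper_lie br2 n) eta \<and>
        sub_iso s1 br1 (lower_lie s1 br1 (n + 1)) s2 br2 (lower_lie s2 br2 (n + 1)) xi \<and>
        (\<forall>x y. (\<forall>i\<le>n. eta (coset (upper_lie br1 n) (x i)) = coset (upper_lie br2 n) (y i)) \<longrightarrow>
               xi (iter_lie br1 x n) = iter_lie br2 y n))"

end

theory Submission
  imports Defs
begin

text \<open>Write \<open>Z\<close> for the n-th upper and \<open>\<gamma>\<close> for the (n+1)-st lower Lie-central series
  term. Membership in \<open>Z\<close> means that every iterated bracket \<open>[\<dots>[g,x\<^sub>1]\<^sub>l\<^sub>i\<^sub>e,\<dots>,x\<^sub>n]\<^sub>l\<^sub>i\<^sub>e\<close>
  vanishes. For n \<ge> 1, \<open>\<gamma>\<close> is the span of the iterated brackets of length n+1; since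
  \<open>[u,[a,b]\<^sub>l\<^sub>i\<^sub>e] = 0\<close> in a Leibniz algebra, \<open>\<gamma>\<close> is annihilated from the left, so on \<open>\<gamma>\<close>
  the bracket \<open>[g,x]\<^sub>l\<^sub>i\<^sub>e\<close> is just \<open>[g,x]\<close>, and right multiplication acts on iterated
  brackets as a derivation. Hence the isomorphism \<open>\<xi>\<close> of an isoclinism satisfies
  \<open>\<xi>[g,x] = [\<xi> g,y]\<close> whenever \<open>\<eta>(x + Z) = y + Z\<close>, so it transports the brackets that
  detect \<open>Z\<close> and maps \<open>\<gamma> \<inter> Z\<close> onto \<open>\<gamma> \<inter> Z\<close>. In an n-Lie-stem algebra \<open>Z \<subseteq> \<gamma>\<close>,
  so \<open>\<xi>\<close> restricts to an isomorphism of the centres.\<close>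

lemma iter_lie_cong: "(\<And>i. i \<le> k \<Longrightarrow> xs i = ys i) \<Longrightarrow> iter_lie br xs k = iter_lie br ys k"
  by (induction k) auto

lemma upper_lie_iff_foldl:
  "x \<in> upper_lie br k \<longleftrightarrow> (\<forall>ys. length ys = k \<longrightarrow> foldl (lie_br br) x ys = 0)"
proof (induction k arbitrary: x)
  case 0
  then show ?case by simp
next
  case (Suc k)
  have "x \<in> upper_lie br (Suc k) \<longleftrightarrow> (\<forall>y ys. length ys = k \<longrightarrow> foldl (lie_br br) (lie_br br x y) ys = 0)"
    using Suc by auto
  also have "\<dots> \<longleftrightarrow> (\<forall>ys. length ys = Suc k \<longrightarrow> foldl (lie_br br) x ys = 0)"
    by (metis foldl_Cons length_Suc_conv)
  finally show ?case .
qed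

lemma gen_ideal_superset: "S \<subseteq> gen_ideal s br S"
  unfolding gen_ideal_def by auto

lemma gen_ideal_minimal: "two_sided_ideal s br J \<Longrightarrow> S \<subseteq> J \<Longrightarrow> gen_ideal s br S \<subseteq> J"
  unfolding gen_ideal_def by auto

lemma (in vector_space) subspace_gen_ideal: "subspace (gen_ideal scale br S)"
  unfolding gen_ideal_def two_sided_ideal_def by (rule subspace_Inter) blast

lemma (in vector_space) subspace_lower_lie: "subspace (lower_lie scale br k)"
  by (cases "(scale, br, k)" rule: lower_lie.cases) (simp_all add: lie_comm_def subspace_gen_ideal)

lemma sub_iso_restrict:
  assumes "sub_iso s1 br1 A s2 br2 B f" and "A' \<subseteq> A" and "f ` A' = B'"
  shows "sub_iso s1 br1 A' s2 br2 B' f"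
  using assms unfolding sub_iso_def bij_betw_def by (metis inj_on_subset subsetD)

locale leibniz_alg =
  fixes s :: "'k::field \<Rightarrow> 'a::ab_group_add \<Rightarrow> 'a" and br :: "'a \<Rightarrow> 'a \<Rightarrow> 'a"
  assumes leibniz_algebra: "leibniz_algebra s br"
begin

sublocale vector_space s
  using leibniz_algebra unfolding leibniz_algebra_def by blast

lemma br_add_right [simp]: "br x (a + b) = br x a + br x b"
  and br_scale_right [simp]: "br x (s c a) = s c (br x a)"
  using leibniz_algebra unfolding leibniz_algebra_def linear_iff by auto

lemma br_add_left [simp]: "br (a + b) x = br a x + br b x"
  and br_scale_left [simp]: "br (s c a) x = s c (br a x)"
  using leibniz_algebra unfolding leibniz_algebra_def linear_iff by auto

lemma br_zero_left [simp]: "br 0 x = 0"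
  using br_add_left[of 0 0 x] by simp

lemma br_zero_right [simp]: "br x 0 = 0"
  using br_add_right[of x 0 0] by simp

lemma lie_br_add_left [simp]: "lie_br br (a + b) x = lie_br br a x + lie_br br b x"
  and lie_br_scale_left [simp]: "lie_br br (s c a) x = s c (lie_br br a x)"
  and lie_br_zero_left [simp]: "lie_br br 0 x = 0"
  unfolding lie_br_def by (simp_all add: scale_right_distrib)

lemma leibniz: "br x (br y z) = br (br x y) z - br (br x z) y"
  using leibniz_algebra unfolding leibniz_algebra_def by blast

lemma br_lie_br_eq_0 [simp]: "br u (lie_br br a b) = 0"
  unfolding lie_br_def by (simp add: leibniz[of u a b] leibniz[of u b a])

lemma br_br_left: "br (br x y) z = br x (br y z) + br (br x z) y"
  by (simp add: leibniz)

lemma br_lie_br_left: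
  "br (lie_br br a b) x = lie_br br a (br b x) + lie_br br (br a x) b"
  unfolding lie_br_def by (simp add: br_br_left[of a b x] br_br_left[of b a x] algebra_simps)

lemma lie_br_sum_left: "lie_br br (sum f A) x = (\<Sum>i\<in>A. lie_br br (f i) x)"
  by (induction A rule: infinite_finite_induct) simp_all

lemma br_iter_lie:
  "br (iter_lie br xs k) x = (\<Sum>i\<le>k. iter_lie br (xs(i := br (xs i) x)) k)"
proof (induction k)
  case 0
  then show ?case by simp
next
  case (Suc k)
  let ?xs' = "\<lambda>i. xs(i := br (xs i) x)"
  have last: "lie_br br (iter_lie br xs k) (br (xs (Suc k)) x) = iter_lie br (?xs' (Suc k)) (Suc k)"
    using iter_lie_cong[of k xs "?xs' (Suc k)" br] by simp
  have "br (iter_lie br xs (Suc k)) x =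
      lie_br br (br (iter_lie br xs k) x) (xs (Suc k)) + lie_br br (iter_lie br xs k) (br (xs (Suc k)) x)"
    by (simp add: br_lie_br_left)
  also have "\<dots> = (\<Sum>i\<le>k. iter_lie br (?xs' i) (Suc k)) + iter_lie br (?xs' (Suc k)) (Suc k)"
    unfolding Suc lie_br_sum_left last by simp
  finally show ?case by (simp only: sum.atMost_Suc)
qed

abbreviation brackets :: "nat \<Rightarrow> 'a set" where
  "brackets k \<equiv> range (\<lambda>xs. iter_lie br xs k)"

lemma iter_lie_in_span_brackets: "iter_lie br xs k \<in> span (brackets k)"
  by (rule span_base) (rule rangeI)

lemma iter_lie_in_lower_lie: "iter_lie br xs k \<in> lower_lie s br (Suc k)"
proof (induction k)
  case 0
  then show ?case by simp
next
  case (Suc k)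
  then show ?case
    using gen_ideal_superset by (fastforce simp: lie_comm_def)
qed

lemma br_span_brackets_eq_0:
  assumes "0 < k" and "g \<in> span (brackets k)" shows "br y g = 0"
  using assms(2)
proof (induction g rule: span_induct_alt)
  case (step c g h)
  moreover obtain j where "k = Suc j" using assms(1) gr0_implies_Suc by blast
  ultimately show ?case by auto
qed simp

lemma br_span_brackets:
  assumes "g \<in> span (brackets k)" shows "br g y \<in> span (brackets k)"
  using assms
proof (induction g rule: span_induct_alt)
  case (step c g h)
  then obtain xs where "g = iter_lie br xs k" by blast
  then have "br g y \<in> span (brackets k)"
    by (simp add: br_iter_lie span_sum iter_lie_in_span_brackets)
  with step show ?case by (simp add: span_add span_scale)
qed (simp add: span_zero)

lemma two_sided_ideal_span_brackets:
  "0 < k \<Longrightarrow> two_sided_ideal s br (span (brackets k))"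
  unfolding two_sided_ideal_def
  using br_span_brackets br_span_brackets_eq_0 span_zero by auto

lemma lie_br_span_brackets:
  assumes "g \<in> span (brackets k)" shows "lie_br br g x \<in> span (brackets (Suc k))"
  using assms
proof (induction g rule: span_induct_alt)
  case (step c g h)
  then obtain xs where "g = iter_lie br xs k" by blast
  then have "lie_br br g x = iter_lie br (xs(Suc k := x)) (Suc k)"
    using iter_lie_cong[of k xs "xs(Suc k := x)" br] by simp
  then have "lie_br br g x \<in> span (brackets (Suc k))"
    by (simp only: iter_lie_in_span_brackets)
  with step show ?case by (simp add: span_add span_scale)
qed (simp add: span_zero)

lemma lower_lie_eq_span_brackets: "lower_lie s br (Suc k) = span (brackets k)"
proof
  show "span (brackets k) \<subseteq> lower_lie s br (Suc k)"
    by (rule span_minimal) (auto simp: iter_lie_in_lower_lie subspace_lower_lie)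
  show "lower_lie s br (Suc k) \<subseteq> span (brackets k)"
  proof (induction k)
    case 0
    have "x \<in> brackets 0" for x
      by (rule range_eqI[of _ _ "\<lambda>_. x"]) simp
    then show ?case by (auto intro: span_base)
  next
    case (Suc k)
    then show ?case
      unfolding lower_lie.simps lie_comm_def
      by (intro gen_ideal_minimal two_sided_ideal_span_brackets) (blast intro: lie_br_span_brackets)+
  qed
qed

lemma br_in_lower_lie: "g \<in> lower_lie s br (Suc k) \<Longrightarrow> br g x \<in> lower_lie s br (Suc k)"
  unfolding lower_lie_eq_span_brackets by (rule br_span_brackets)

lemma lie_br_eq_br: "0 < k \<Longrightarrow> g \<in> lower_lie s br (Suc k) \<Longrightarrow> lie_br br g x = br g x"
  unfolding lie_br_def lower_lie_eq_span_brackets by (simp add: br_span_brackets_eq_0)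

end

locale lie_isoclinism =
  g: leibniz_alg s1 br1 + q: leibniz_alg s2 br2
  for s1 :: "'k::field \<Rightarrow> 'a::ab_group_add \<Rightarrow> 'a" and br1
    and s2 :: "'k \<Rightarrow> 'b::ab_group_add \<Rightarrow> 'b" and br2 +
  fixes n :: nat and eta :: "'a set \<Rightarrow> 'b set" and xi :: "'a \<Rightarrow> 'b"
  assumes n_pos: "0 < n"
    and eta: "quot_iso s1 br1 (upper_lie br1 n) s2 br2 (upper_lie br2 n) eta"
    and xi: "sub_iso s1 br1 (lower_lie s1 br1 (n + 1)) s2 br2 (lower_lie s2 br2 (n + 1)) xi"
    and xi_iter_lie: "\<And>x y. \<forall>i\<le>n. eta (coset (upper_lie br1 n) (x i)) = coset (upper_lie br2 n) (y i)
      \<Longrightarrow> xi (iter_lie br1 x n) = iter_lie br2 y n"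
begin

definition corresp :: "'a \<Rightarrow> 'b \<Rightarrow> bool" where
  "corresp x y \<longleftrightarrow> eta (coset (upper_lie br1 n) x) = coset (upper_lie br2 n) y"

lemma corresp_ex_right: "\<exists>y. corresp x y"
  using bij_betwE[OF conjunct1[OF eta[unfolded quot_iso_def]]] unfolding corresp_def by blast

lemma corresp_ex_left: "\<exists>x. corresp x y"
proof -
  have "coset (upper_lie br2 n) y \<in> eta ` range (coset (upper_lie br1 n))"
    using bij_betw_imp_surj_on[OF conjunct1[OF eta[unfolded quot_iso_def]]] by simp
  then show ?thesis unfolding corresp_def by auto
qed

lemma corresp_br: "corresp x y \<Longrightarrow> corresp x' y' \<Longrightarrow> corresp (br1 x x') (br2 y y')"
  using eta unfolding quot_iso_def corresp_def by blast

lemma list_all2_corresp_ex_right: "\<exists>ys. list_all2 corresp xs ys"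
proof (induction xs)
  case (Cons x xs)
  then obtain y ys where "corresp x y" "list_all2 corresp xs ys"
    using corresp_ex_right by blast
  then show ?case by (intro exI[of _ "y # ys"]) simp
qed simp

lemma list_all2_corresp_ex_left: "\<exists>xs. list_all2 corresp xs ys"
proof (induction ys)
  case (Cons y ys)
  then obtain x xs where "corresp x y" "list_all2 corresp xs ys"
    using corresp_ex_left by blast
  then show ?case by (intro exI[of _ "x # xs"]) simp
qed simp

lemma bij_betw_xi: "bij_betw xi (lower_lie s1 br1 (Suc n)) (lower_lie s2 br2 (Suc n))"
  using xi unfolding sub_iso_def by simp

lemma xi_add: "a \<in> lower_lie s1 br1 (Suc n) \<Longrightarrow> b \<in> lower_lie s1 br1 (Suc n) \<Longrightarrow> xi (a + b) = xi a + xi b"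
  and xi_scale: "a \<in> lower_lie s1 br1 (Suc n) \<Longrightarrow> xi (s1 c a) = s2 c (xi a)"
  using xi unfolding sub_iso_def by simp_all

lemma xi_zero: "xi 0 = 0"
  using xi_add[of 0 0] g.subspace_0[OF g.subspace_lower_lie] by simp

lemma xi_sum:
  "(\<And>i. i \<in> A \<Longrightarrow> f i \<in> lower_lie s1 br1 (Suc n)) \<Longrightarrow> xi (sum f A) = (\<Sum>i\<in>A. xi (f i))"
proof (induction A rule: infinite_finite_induct)
  case (insert i A)
  then show ?case
    by (simp add: xi_add g.subspace_sum[OF g.subspace_lower_lie])
qed (simp_all add: xi_zero)

lemma xi_iter_lie_corresp:
  "(\<And>i. corresp (xs i) (ys i)) \<Longrightarrow> xi (iter_lie br1 xs n) = iter_lie br2 ys n"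
  using xi_iter_lie unfolding corresp_def by blast

lemma xi_br_iter_lie:
  assumes "corresp x y"
  shows "xi (br1 (iter_lie br1 xs n) x) = br2 (xi (iter_lie br1 xs n)) y"
proof -
  define ys where "ys i = (SOME y. corresp (xs i) y)" for i
  have ys: "corresp (xs i) (ys i)" for i
    unfolding ys_def by (rule someI_ex) (rule corresp_ex_right)
  have "xi (br1 (iter_lie br1 xs n) x) = (\<Sum>i\<le>n. xi (iter_lie br1 (xs(i := br1 (xs i) x)) n))"
    unfolding g.br_iter_lie by (rule xi_sum) (rule g.iter_lie_in_lower_lie)
  also have "\<dots> = (\<Sum>i\<le>n. iter_lie br2 (ys(i := br2 (ys i) y)) n)"
    by (intro sum.cong refl xi_iter_lie_corresp) (simp add: ys corresp_br assms)
  also have "\<dots> = br2 (xi (iter_lie br1 xs n)) y"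
    unfolding q.br_iter_lie xi_iter_lie_corresp[OF ys] ..
  finally show ?thesis .
qed

lemma xi_br_right:
  assumes "g \<in> lower_lie s1 br1 (Suc n)" and "corresp x y"
  shows "xi (br1 g x) = br2 (xi g) y"
proof -
  let ?G1 = "lower_lie s1 br1 (Suc n)"
  have G1_add: "a \<in> ?G1 \<Longrightarrow> b \<in> ?G1 \<Longrightarrow> a + b \<in> ?G1"
    and G1_scale: "a \<in> ?G1 \<Longrightarrow> s1 c a \<in> ?G1" for a b c
    by (simp_all add: g.subspace_add g.subspace_scale g.subspace_lower_lie)
  note G1_br = g.br_in_lower_lie[of _ n x]
  \<comment> \<open>Membership is part of the invariant: \<open>span_induct_alt\<close> does not provide it for the tail.\<close>
  have "g \<in> ?G1 \<and> xi (br1 g x) = br2 (xi g) y"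
    using assms(1) unfolding g.lower_lie_eq_span_brackets
  proof (induction g rule: g.span_induct_alt)
    case base
    then show ?case by (simp add: xi_zero g.span_zero)
  next
    case (step c g h)
    then obtain xs where xs: "g = iter_lie br1 xs n" by blast
    have g: "g \<in> ?G1" and h: "h \<in> ?G1"
      using xs g.iter_lie_in_lower_lie step.IH unfolding g.lower_lie_eq_span_brackets by simp_all
    have "xi (br1 (s1 c g + h) x) = s2 c (xi (br1 g x)) + xi (br1 h x)"
      using xi_add[OF G1_scale[OF G1_br[OF g]] G1_br[OF h]] xi_scale[OF G1_br[OF g]] by simp
    also have "xi (br1 g x) = br2 (xi g) y"
      unfolding xs by (rule xi_br_iter_lie[OF assms(2)])
    also have "s2 c (br2 (xi g) y) + xi (br1 h x) = br2 (xi (s1 c g + h)) y"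
      using step.IH xi_add[OF G1_scale[OF g] h] xi_scale[OF g] by simp
    finally show ?case
      using G1_add[OF G1_scale[OF g] h] unfolding g.lower_lie_eq_span_brackets by simp
  qed
  then show ?thesis ..
qed

lemma xi_foldl_lie_br:
  assumes "list_all2 corresp xs ys" and "g \<in> lower_lie s1 br1 (Suc n)"
  shows "foldl (lie_br br1) g xs \<in> lower_lie s1 br1 (Suc n)
    \<and> xi (foldl (lie_br br1) g xs) = foldl (lie_br br2) (xi g) ys"
  using assms
proof (induction xs ys arbitrary: g rule: list_all2_induct)
  case (Cons x xs y ys)
  have "xi g \<in> lower_lie s2 br2 (Suc n)"
    using bij_betwE[OF bij_betw_xi] Cons.prems by blast
  then have "xi (lie_br br1 g x) = lie_br br2 (xi g) y"
    using Cons.prems Cons.hyps(1) n_pos by (simp add: g.lie_br_eq_br q.lie_br_eq_br xi_br_right)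
  moreover have "lie_br br1 g x \<in> lower_lie s1 br1 (Suc n)"
    using Cons.prems n_pos by (simp add: g.lie_br_eq_br g.br_in_lower_lie)
  ultimately show ?case using Cons.IH by simp
qed simp

lemma xi_in_upper_lie_iff:
  assumes g: "g \<in> lower_lie s1 br1 (Suc n)"
  shows "xi g \<in> upper_lie br2 n \<longleftrightarrow> g \<in> upper_lie br1 n"
proof
  assume xi_g: "xi g \<in> upper_lie br2 n"
  have "foldl (lie_br br1) g xs = 0" if "length xs = n" for xs
  proof -
    obtain ys where ys: "list_all2 corresp xs ys"
      using list_all2_corresp_ex_right by blast
    then have "xi (foldl (lie_br br1) g xs) = xi 0"
      using xi_foldl_lie_br[OF ys g] xi_g that
      by (simp add: upper_lie_iff_foldl list_all2_lengthD xi_zero)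
    moreover have "foldl (lie_br br1) g xs \<in> lower_lie s1 br1 (Suc n)"
      using xi_foldl_lie_br[OF ys g] ..
    ultimately show ?thesis
      using bij_betw_imp_inj_on[OF bij_betw_xi] g.subspace_0[OF g.subspace_lower_lie]
      by (blast dest: inj_onD)
  qed
  then show "g \<in> upper_lie br1 n" by (simp add: upper_lie_iff_foldl)
next
  assume g_Z: "g \<in> upper_lie br1 n"
  have "foldl (lie_br br2) (xi g) ys = 0" if "length ys = n" for ys
  proof -
    obtain xs where xs: "list_all2 corresp xs ys"
      using list_all2_corresp_ex_left by blast
    then show ?thesis
      using xi_foldl_lie_br[OF xs g] g_Z that
      by (simp add: upper_lie_iff_foldl list_all2_lengthD xi_zero)
  qed
  then show "xi g \<in> upper_lie br2 n" by (simp add: upper_lie_iff_foldl)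
qed

lemma sub_iso_upper_lie:
  assumes "n_lie_stem n s1 br1" and "n_lie_stem n s2 br2"
  shows "sub_iso s1 br1 (upper_lie br1 n) s2 br2 (upper_lie br2 n) xi"
proof (rule sub_iso_restrict[OF xi])
  have Z1: "upper_lie br1 n \<subseteq> lower_lie s1 br1 (Suc n)"
    and Z2: "upper_lie br2 n \<subseteq> lower_lie s2 br2 (Suc n)"
    using assms unfolding n_lie_stem_def by simp_all
  then show "upper_lie br1 n \<subseteq> lower_lie s1 br1 (n + 1)" by simp
  show "xi ` upper_lie br1 n = upper_lie br2 n"
  proof
    show "xi ` upper_lie br1 n \<subseteq> upper_lie br2 n"
      using Z1 xi_in_upper_lie_iff by blast
    show "upper_lie br2 n \<subseteq> xi ` upper_lie br1 n"
    proof
      fix z assume z: "z \<in> upper_lie br2 n"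
      then obtain g where "g \<in> lower_lie s1 br1 (Suc n)" "z = xi g"
        using Z2 bij_betw_imp_surj_on[OF bij_betw_xi] by blast
      with z show "z \<in> xi ` upper_lie br1 n"
        using xi_in_upper_lie_iff by blast
    qed
  qed
qed

end

theorem mainTheorem18:
  fixes n :: nat
    and s1 :: "'k::field \<Rightarrow> 'a::ab_group_add \<Rightarrow> 'a" and br1 :: "'a \<Rightarrow> 'a \<Rightarrow> 'a"
    and s2 :: "'k \<Rightarrow> 'b::ab_group_add \<Rightarrow> 'b" and br2 :: "'b \<Rightarrow> 'b \<Rightarrow> 'b"
  assumes half: "(2::'k) \<noteq> 0"
    and g: "leibniz_algebra s1 br1"
    and q: "leibniz_algebra s2 br2"
    and g_stem: "n_lie_stem n s1 br1"
    and q_stem: "n_lie_stem n s2 br2"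
    and iso: "n_lie_isoclinic n s1 br1 s2 br2"
  shows "\<exists>f. sub_iso s1 br1 (upper_lie br1 n) s2 br2 (upper_lie br2 n) f"
proof (cases "n = 0")
  case True
  interpret q: leibniz_alg s2 br2 by (rule leibniz_alg.intro[OF q])
  have "sub_iso s1 br1 {0} s2 br2 {0} (\<lambda>_. 0)"
    unfolding sub_iso_def by (simp add: bij_betw_def)
  with True show ?thesis by auto
next
  case False
  from iso obtain eta xi where
    "quot_iso s1 br1 (upper_lie br1 n) s2 br2 (upper_lie br2 n) eta"
    "sub_iso s1 br1 (lower_lie s1 br1 (n + 1)) s2 br2 (lower_lie s2 br2 (n + 1)) xi"
    "\<forall>x y. (\<forall>i\<le>n. eta (coset (upper_lie br1 n) (x i)) = coset (upper_lie br2 n) (y i))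
      \<longrightarrow> xi (iter_lie br1 x n) = iter_lie br2 y n"
    unfolding n_lie_isoclinic_def by blast
  with False g q interpret lie_isoclinism s1 br1 s2 br2 n eta xi
    by (simp add: lie_isoclinism_def lie_isoclinism_axioms_def leibniz_alg_def)
  show ?thesis using sub_iso_upper_lie[OF g_stem q_stem] by blast
qed

end
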